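(* If $G$ is a geometric strongly regular graph, then $G$ is integrable.
   Context: A strongly regular graph with parameters $(v,k,\lambda,\mu)$ is a $k$-regular graph on $v$ vertices in which adjacent vertices have $\lambda$ common neighbours and distinct nonadjacent vertices have $\mu$ common neighbours. Let $\theta_{\min}(G)$ be the smallest eigenvalue of the adjacency matrix $A(G)$. Every clique of $G$ has at most $1-\frac{k}{\theta_{\min}(G)}$ vertices; a clique with exactly this many vertices is called a Delsarte clique. $G$ is geometric if there is a set $\mathcal{C}$ of Delsarte cliques of $G$ such that every pair of adjacent vertices lies in exactly one clique of $\mathcal{C}$. A graph $G$ is integrable if there is an integral matrix $N$ with $A(G)-\lfloor\theta_{\min}(G)\rfloor I=N^TN$. *)

theory Defs
  imports "Jordan_Normal_Form.Char_Poly"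
begin

text \<open>A finite simple graph on the vertex set {0..<n}, given by a symmetric
irreflexive adjacency relation E (only its restriction to {0..<n} matters).\<close>

definition simple_graph :: "nat \<Rightarrow> (nat \<Rightarrow> nat \<Rightarrow> bool) \<Rightarrow> bool" where
  "simple_graph n E \<longleftrightarrow> (\<forall>u<n. \<not> E u u) \<and> (\<forall>u<n. \<forall>v<n. E u v \<longrightarrow> E v u)"

definition nbhd :: "nat \<Rightarrow> (nat \<Rightarrow> nat \<Rightarrow> bool) \<Rightarrow> nat \<Rightarrow> nat set" where
  "nbhd n E u = {w. w < n \<and> E u w}"

definition strongly_regular ::
  "nat \<Rightarrow> (nat \<Rightarrow> nat \<Rightarrow> bool) \<Rightarrow> nat \<Rightarrow> nat \<Rightarrow> nat \<Rightarrow> nat \<Rightarrow> bool" where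
  "strongly_regular n E v k lam mu \<longleftrightarrow>
     simple_graph n E \<and> n = v \<and>
     (\<forall>u<n. card (nbhd n E u) = k) \<and>
     (\<forall>u<n. \<forall>w<n. E u w \<longrightarrow> card (nbhd n E u \<inter> nbhd n E w) = lam) \<and>
     (\<forall>u<n. \<forall>w<n. u \<noteq> w \<and> \<not> E u w \<longrightarrow> card (nbhd n E u \<inter> nbhd n E w) = mu)"

definition adj_mat :: "nat \<Rightarrow> (nat \<Rightarrow> nat \<Rightarrow> bool) \<Rightarrow> 'a :: {zero,one} mat" where
  "adj_mat n E = mat n n (\<lambda>(i, j). if E i j then 1 else 0)"

definition theta_min :: "nat \<Rightarrow> (nat \<Rightarrow> nat \<Rightarrow> bool) \<Rightarrow> real" where
  "theta_min n E = Min {t. eigenvalue (adj_mat n E :: real mat) t}"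

definition is_clique :: "nat \<Rightarrow> (nat \<Rightarrow> nat \<Rightarrow> bool) \<Rightarrow> nat set \<Rightarrow> bool" where
  "is_clique n E C \<longleftrightarrow> C \<subseteq> {..<n} \<and> (\<forall>u\<in>C. \<forall>w\<in>C. u \<noteq> w \<longrightarrow> E u w)"

definition delsarte_clique :: "nat \<Rightarrow> (nat \<Rightarrow> nat \<Rightarrow> bool) \<Rightarrow> nat \<Rightarrow> nat set \<Rightarrow> bool" where
  "delsarte_clique n E k C \<longleftrightarrow>
     is_clique n E C \<and> real (card C) = 1 - real k / theta_min n E"

definition geometric :: "nat \<Rightarrow> (nat \<Rightarrow> nat \<Rightarrow> bool) \<Rightarrow> nat \<Rightarrow> bool" where
  "geometric n E k \<longleftrightarrow>
     (\<exists>\<C>. (\<forall>C\<in>\<C>. delsarte_clique n E k C) \<and>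
          (\<forall>u<n. \<forall>w<n. E u w \<longrightarrow> (\<exists>!C. C \<in> \<C> \<and> u \<in> C \<and> w \<in> C)))"

definition integrable :: "nat \<Rightarrow> (nat \<Rightarrow> nat \<Rightarrow> bool) \<Rightarrow> bool" where
  "integrable n E \<longleftrightarrow>
     (\<exists>m. \<exists>N :: int mat. N \<in> carrier_mat m n \<and>
        adj_mat n E - of_int \<lfloor>theta_min n E\<rfloor> \<cdot>\<^sub>m 1\<^sub>m n = transpose_mat N * N)"

end

theory Submission
  imports Defs
begin

text \<open>The cliques of a geometric graph partition its edges, so the neighbourhood of a
vertex u splits into the sets C - {u} over the cliques C through u. Each of them has
-k / theta_min elements, hence every vertex lies in exactly t = -theta_min of the
cliques. For the clique-vertex incidence matrix N, the entry (i, j) of N^T N counts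
the cliques containing both i and j, which is t on the diagonal and 1 or 0 off it
according to adjacency. So N^T N = A + t I = A - \<lfloor>theta_min\<rfloor> I. For an edgeless
graph theta_min = 0 and the empty family of cliques does the job.\<close>

definition incidence_mat :: "nat set list \<Rightarrow> nat \<Rightarrow> int mat" where
  "incidence_mat cs n = mat (length cs) n (\<lambda>(l, j). if j \<in> cs ! l then 1 else 0)"

lemma gram_incidence_mat_entry:
  assumes "distinct cs" "i < n" "j < n"
  shows "(transpose_mat (incidence_mat cs n) * incidence_mat cs n) $$ (i, j)
           = int (card {C \<in> set cs. i \<in> C \<and> j \<in> C})"
proof -
  let ?L = "{l. l < length cs \<and> i \<in> cs ! l \<and> j \<in> cs ! l}"
  have "(transpose_mat (incidence_mat cs n) * incidence_mat cs n) $$ (i, j)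
          = (\<Sum>l\<in>{0..<length cs}. if i \<in> cs ! l \<and> j \<in> cs ! l then 1 else 0)"
    using assms by (auto simp: incidence_mat_def scalar_prod_def intro!: sum.cong)
  also have "\<dots> = int (card ?L)"
    by (simp add: sum.If_cases atLeast0LessThan Int_def)
  also have "card ?L = card ((!) cs ` ?L)"
    using assms(1) by (intro card_image[symmetric]) (auto simp: inj_on_def nth_eq_iff_index_eq)
  also have "(!) cs ` ?L = {C \<in> set cs. i \<in> C \<and> j \<in> C}"
    by (auto simp: in_set_conv_nth)
  finally show ?thesis .
qed

lemma eigenvalue_zero_mat_iff:
  "eigenvalue (0\<^sub>m n n :: 'a :: idom mat) t \<longleftrightarrow> 0 < n \<and> t = 0"
proof
  assume "eigenvalue (0\<^sub>m n n :: 'a mat) t"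
  then obtain v where v: "v \<in> carrier_vec n" "v \<noteq> 0\<^sub>v n" "0\<^sub>m n n *\<^sub>v v = t \<cdot>\<^sub>v v"
    by (auto simp: eigenvalue_def eigenvector_def)
  then obtain i where i: "i < n" "v $ i \<noteq> 0"
    by (metis eq_vecI carrier_vecD index_zero_vec)
  have "t * v $ i = (0\<^sub>m n n *\<^sub>v v) $ i"
    using v(3) i v(1) by simp
  also have "\<dots> = 0"
    using i v(1) by (simp add: scalar_prod_def)
  finally show "0 < n \<and> t = 0"
    using i by simp
next
  assume "0 < n \<and> t = 0"
  then show "eigenvalue (0\<^sub>m n n :: 'a mat) t"
    unfolding eigenvalue_def eigenvector_def
    by (intro exI[of _ "unit_vec n 0"]) (auto simp: unit_vec_def vec_eq_iff)
qed

lemma theta_min_edgeless: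
  assumes "0 < n" "\<forall>u<n. \<forall>w<n. \<not> E u w"
  shows "theta_min n E = 0"
proof -
  have "adj_mat n E = (0\<^sub>m n n :: real mat)"
    using assms(2) by (auto simp: adj_mat_def)
  then show ?thesis
    using assms(1) by (simp add: theta_min_def eigenvalue_zero_mat_iff)
qed

definition clique_edge_partition :: "nat \<Rightarrow> (nat \<Rightarrow> nat \<Rightarrow> bool) \<Rightarrow> nat set set \<Rightarrow> bool" where
  "clique_edge_partition n E \<C> \<longleftrightarrow>
     (\<forall>C\<in>\<C>. is_clique n E C) \<and>
     (\<forall>u<n. \<forall>w<n. E u w \<longrightarrow> (\<exists>!C. C \<in> \<C> \<and> u \<in> C \<and> w \<in> C))"

lemma clique_edge_partition_finite:
  assumes "clique_edge_partition n E \<C>"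
  shows "finite \<C>" and "C \<in> \<C> \<Longrightarrow> finite C"
proof -
  have "\<C> \<subseteq> Pow {..<n}"
    using assms by (auto simp: clique_edge_partition_def is_clique_def)
  then show "finite \<C>" "C \<in> \<C> \<Longrightarrow> finite C"
    by (auto intro: finite_subset)
qed

lemma clique_edge_partition_adjacent:
  assumes "clique_edge_partition n E \<C>" "C \<in> \<C>" "u \<in> C" "w \<in> C" "u \<noteq> w"
  shows "E u w" and "u < n" and "w < n"
  using assms by (auto simp: clique_edge_partition_def is_clique_def)

lemma clique_edge_partition_cover:
  assumes "clique_edge_partition n E \<C>" "E u w" "u < n" "w < n"
  obtains C where "C \<in> \<C>" "u \<in> C" "w \<in> C"
  using assms unfolding clique_edge_partition_def by blast

lemma clique_edge_partition_unique:
  assumes "clique_edge_partition n E \<C>" "E u w" "u < n" "w < n"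
    and "C1 \<in> \<C>" "u \<in> C1" "w \<in> C1" "C2 \<in> \<C>" "u \<in> C2" "w \<in> C2"
  shows "C1 = C2"
  using assms unfolding clique_edge_partition_def by blast

lemma card_cliques_containing_pair:
  assumes "clique_edge_partition n E \<C>" "i < n" "j < n" "i \<noteq> j"
  shows "card {C \<in> \<C>. i \<in> C \<and> j \<in> C} = (if E i j then 1 else 0)"
proof (cases "E i j")
  case True
  then obtain C where C: "C \<in> \<C>" "i \<in> C" "j \<in> C"
    using clique_edge_partition_cover assms(1-3) by blast
  then have "{C \<in> \<C>. i \<in> C \<and> j \<in> C} = {C}"
    using clique_edge_partition_unique[OF assms(1) True assms(2,3)] by blast
  with True show ?thesis by simp
next
  case False
  then have "{C \<in> \<C>. i \<in> C \<and> j \<in> C} = {}"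
    using clique_edge_partition_adjacent(1)[OF assms(1) _ _ _ assms(4)] by blast
  with False show ?thesis by (simp only: card.empty if_False)
qed

lemma card_nbhd_eq_sum_cliques:
  assumes "simple_graph n E" "clique_edge_partition n E \<C>" "u < n"
  shows "card (nbhd n E u) = (\<Sum>C\<in>{C \<in> \<C>. u \<in> C}. card C - 1)"
proof -
  let ?D = "{C \<in> \<C>. u \<in> C}"
  note fin = clique_edge_partition_finite[OF assms(2)]
  have nbhd_eq: "nbhd n E u = (\<Union>C\<in>?D. C - {u})"
  proof (intro equalityI subsetI)
    fix w assume w: "w \<in> nbhd n E u"
    then have "w < n" "E u w" "w \<noteq> u"
      using assms(1,3) by (auto simp: nbhd_def simple_graph_def)
    then obtain C where "C \<in> \<C>" "u \<in> C" "w \<in> C"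
      using clique_edge_partition_cover[OF assms(2)] assms(3) by metis
    with \<open>w \<noteq> u\<close> show "w \<in> (\<Union>C\<in>?D. C - {u})" by blast
  next
    fix w assume "w \<in> (\<Union>C\<in>?D. C - {u})"
    then obtain C where "C \<in> \<C>" "u \<in> C" "w \<in> C" "u \<noteq> w" by blast
    then show "w \<in> nbhd n E u"
      using clique_edge_partition_adjacent[OF assms(2)] by (simp add: nbhd_def)
  qed
  have disjoint: "(C1 - {u}) \<inter> (C2 - {u}) = {}"
    if "C1 \<in> ?D" "C2 \<in> ?D" "C1 \<noteq> C2" for C1 C2
  proof (rule ccontr)
    assume "(C1 - {u}) \<inter> (C2 - {u}) \<noteq> {}"
    then obtain w where w: "w \<in> C1" "w \<in> C2" "u \<noteq> w" by blast
    have "E u w" "w < n"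
      using clique_edge_partition_adjacent[OF assms(2)] that(1) w by auto
    then have "C1 = C2"
      using clique_edge_partition_unique[OF assms(2) _ assms(3)] that(1,2) w by blast
    with that(3) show False ..
  qed
  have "card (nbhd n E u) = (\<Sum>C\<in>?D. card (C - {u}))"
    unfolding nbhd_eq using fin disjoint by (intro card_UN_disjoint) auto
  also have "\<dots> = (\<Sum>C\<in>?D. card C - 1)"
    using fin by (intro sum.cong) auto
  finally show ?thesis .
qed

lemma theta_min_eq_neg_card_cliques:
  assumes "simple_graph n E" "clique_edge_partition n E \<C>"
    and "\<forall>u<n. card (nbhd n E u) = k" "0 < k"
    and "\<forall>C\<in>\<C>. real (card C) = 1 - real k / theta_min n E"
    and "u < n"
  shows "theta_min n E = - real (card {C \<in> \<C>. u \<in> C})"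
proof -
  let ?D = "{C \<in> \<C>. u \<in> C}"
  have "k = (\<Sum>C\<in>?D. card C - 1)"
    using card_nbhd_eq_sum_cliques[OF assms(1,2,6)] assms(3,6) by metis
  then have "real k = (\<Sum>C\<in>?D. real (card C - 1))"
    by (simp only: of_nat_sum)
  also have "\<dots> = (\<Sum>C\<in>?D. - real k / theta_min n E)"
  proof (intro sum.cong refl)
    fix C assume C: "C \<in> ?D"
    then have "card C \<noteq> 0"
      using clique_edge_partition_finite(2)[OF assms(2)] by auto
    then have "real (card C - 1) = real (card C) - 1"
      by simp
    also have "\<dots> = - real k / theta_min n E"
      using assms(5) C by simp
    finally show "real (card C - 1) = - real k / theta_min n E" .
  qed
  finally have "real k = - real (card ?D) * real k / theta_min n E"
    by simp
  moreover from this have "theta_min n E \<noteq> 0"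
    using assms(4) by auto
  ultimately have "real k * theta_min n E = real k * - real (card ?D)"
    by (simp add: field_simps)
  then show ?thesis
    using assms(4) by (subst (asm) mult_left_cancel) auto
qed

lemma adj_plus_diag_eq_gram:
  assumes "simple_graph n E" "clique_edge_partition n E \<C>"
    and "\<forall>u<n. card {C \<in> \<C>. u \<in> C} = t"
  obtains N :: "int mat"
  where "N \<in> carrier_mat (card \<C>) n" "adj_mat n E + int t \<cdot>\<^sub>m 1\<^sub>m n = transpose_mat N * N"
proof -
  obtain cs where cs: "set cs = \<C>" "distinct cs"
    using finite_distinct_list clique_edge_partition_finite(1)[OF assms(2)] by blast
  let ?N = "incidence_mat cs n"
  have "adj_mat n E + int t \<cdot>\<^sub>m 1\<^sub>m n = transpose_mat ?N * ?N"
  proof (rule eq_matI)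
    fix i j assume "i < dim_row (transpose_mat ?N * ?N)" "j < dim_col (transpose_mat ?N * ?N)"
    then have ij: "i < n" "j < n" by (auto simp: incidence_mat_def)
    then show "(adj_mat n E + int t \<cdot>\<^sub>m 1\<^sub>m n) $$ (i, j) = (transpose_mat ?N * ?N) $$ (i, j)"
      using gram_incidence_mat_entry[OF cs(2) ij] card_cliques_containing_pair[OF assms(2) ij]
        assms(1,3) cs(1)
      by (cases "i = j") (auto simp: adj_mat_def simple_graph_def)
  qed (auto simp: incidence_mat_def adj_mat_def)
  moreover have "?N \<in> carrier_mat (card \<C>) n"
    using cs distinct_card by (fastforce simp: incidence_mat_def)
  ultimately show thesis using that by blast
qed

lemma integrable_if_theta_min_eq_neg_card_cliques:
  assumes "simple_graph n E" "clique_edge_partition n E \<C>"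
    and "\<forall>u<n. card {C \<in> \<C>. u \<in> C} = t" "theta_min n E = - real t"
  shows "integrable n E"
proof -
  have floor_theta: "\<lfloor>theta_min n E\<rfloor> = - int t"
    using assms(4) by (metis floor_of_int of_int_minus of_int_of_nat_eq)
  obtain N where "N \<in> carrier_mat (card \<C>) n" "adj_mat n E + int t \<cdot>\<^sub>m 1\<^sub>m n = transpose_mat N * N"
    using adj_plus_diag_eq_gram[OF assms(1-3)] .
  moreover have "adj_mat n E - of_int \<lfloor>theta_min n E\<rfloor> \<cdot>\<^sub>m 1\<^sub>m n = adj_mat n E + int t \<cdot>\<^sub>m 1\<^sub>m n"
    using floor_theta by (auto simp: adj_mat_def)
  ultimately show ?thesis
    unfolding integrable_def by metis
qed

theorem lemma4p2:
  fixes n v k lam mu :: nat and E :: "nat \<Rightarrow> nat \<Rightarrow> bool"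
  assumes "strongly_regular n E v k lam mu"
    and "geometric n E k"
  shows "integrable n E"
proof -
  have simple: "simple_graph n E" and regular: "\<forall>u<n. card (nbhd n E u) = k"
    using assms(1) by (auto simp: strongly_regular_def)
  obtain \<C> where partition: "clique_edge_partition n E \<C>"
    and delsarte: "\<forall>C\<in>\<C>. real (card C) = 1 - real k / theta_min n E"
    using assms(2) by (auto simp: geometric_def delsarte_clique_def clique_edge_partition_def)
  consider "n = 0" | "0 < n" "k = 0" | "0 < n" "0 < k" by blast
  then show ?thesis
  proof cases
    case 1
    then show ?thesis
      unfolding integrable_def
      by (intro exI[of _ 0] exI[of _ "0\<^sub>m 0 0 :: int mat"]) (auto simp: adj_mat_def)
  next
    case 2
    then have edgeless: "\<forall>u<n. \<forall>w<n. \<not> E u w"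
      using regular by (auto simp: nbhd_def)
    show ?thesis
      using simple theta_min_edgeless[OF \<open>0 < n\<close> edgeless] edgeless
      by (intro integrable_if_theta_min_eq_neg_card_cliques[of _ _ "{}" 0])
        (auto simp: clique_edge_partition_def)
  next
    case 3
    let ?t = "card {C \<in> \<C>. 0 \<in> C}"
    have theta: "theta_min n E = - real (card {C \<in> \<C>. u \<in> C})" if "u < n" for u
      using theta_min_eq_neg_card_cliques[OF simple partition regular \<open>0 < k\<close> delsarte that] .
    then have "\<forall>u<n. card {C \<in> \<C>. u \<in> C} = ?t"
      using theta[OF \<open>0 < n\<close>] by simp
    with theta[OF \<open>0 < n\<close>] show ?thesis
      using integrable_if_theta_min_eq_neg_card_cliques[OF simple partition] by blast
  qed
qed

end
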